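(* Let $M$ be a $0/1$-matrix, let $B$ be a block of $M$, and let $i,j$ be two entries of the input boundary $B^-$ with $j>i$ in the input-boundary order, each of which reaches at least one entry of the output boundary $B^+$. Then $\sigma_A(j)\ge\sigma_A(i)$ and $\sigma_Z(j)\ge\sigma_Z(i)$ (in the output-boundary order).
   Context: Let $M$ be an $m\times n$ $0/1$-matrix with entries indexed $(r,s)$ (rows increasing from bottom to top, columns from left to right). A path from $(k,l)$ to $(i,j)$ is a sequence of $1$-entries starting at $(k,l)$ and ending at $(i,j)$ in which each step goes from $(r,s)$ to $(r+1,s)$, $(r,s+1)$ or $(r+1,s+1)$; $(i,j)$ is reachable from $(k,l)$ if such a path exists. A block $B$ is the submatrix formed by rows $r^-\le r\le r^+$ and columns $s^-\le s\le s^+$. Its input boundary $B^-$ consists of the entries in row $r^-$ or column $s^-$ of $B$, ordered: first row $r^-$ from column $s^+$ down to $s^-$, then the remaining entries of column $s^-$ from row $r^-+1$ up to $r^+$. Its output boundary $B^+$ consists of the entries in row $r^+$ or column $s^+$ of $B$, ordered: first column $s^+$ from row $r^-$ up to $r^+$, then the remaining entries of row $r^+$ from column $s^+-1$ down to $s^-$. For an entry $i\in B^-$, $\sigma_A(i)$ and $\sigma_Z(i)$ denote the first and the last entry of $B^+$ (in the output-boundary order) that is reachable from $i$. *)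

theory Defs
  imports Main
begin

text \<open>An m x n 0/1-matrix is a function M :: nat => nat => nat, entry (r,s) with
  0 <= r < m (rows, bottom to top) and 0 <= s < n (columns, left to right).
  Entries are pairs (r,s).\<close>

definition zero_one_matrix :: "nat \<Rightarrow> nat \<Rightarrow> (nat \<Rightarrow> nat \<Rightarrow> nat) \<Rightarrow> bool" where
  "zero_one_matrix m n M \<longleftrightarrow> (\<forall>r<m. \<forall>s<n. M r s \<in> {0, 1})"

definition one_entry :: "nat \<Rightarrow> nat \<Rightarrow> (nat \<Rightarrow> nat \<Rightarrow> nat) \<Rightarrow> nat \<times> nat \<Rightarrow> bool" where
  "one_entry m n M e \<longleftrightarrow> fst e < m \<and> snd e < n \<and> M (fst e) (snd e) = 1"

definition path_step :: "nat \<times> nat \<Rightarrow> nat \<times> nat \<Rightarrow> bool" where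
  "path_step a b \<longleftrightarrow> b = (fst a + 1, snd a) \<or> b = (fst a, snd a + 1) \<or> b = (fst a + 1, snd a + 1)"

definition is_path :: "nat \<Rightarrow> nat \<Rightarrow> (nat \<Rightarrow> nat \<Rightarrow> nat) \<Rightarrow> (nat \<times> nat) list \<Rightarrow> bool" where
  "is_path m n M p \<longleftrightarrow> p \<noteq> [] \<and> (\<forall>e\<in>set p. one_entry m n M e)
     \<and> (\<forall>k. Suc k < length p \<longrightarrow> path_step (p ! k) (p ! Suc k))"

definition reachable :: "nat \<Rightarrow> nat \<Rightarrow> (nat \<Rightarrow> nat \<Rightarrow> nat) \<Rightarrow> nat \<times> nat \<Rightarrow> nat \<times> nat \<Rightarrow> bool" where
  "reachable m n M a b \<longleftrightarrow> (\<exists>p. is_path m n M p \<and> hd p = a \<and> last p = b)"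

definition in_boundary :: "nat \<Rightarrow> nat \<Rightarrow> nat \<Rightarrow> nat \<Rightarrow> (nat \<times> nat) list" where
  "in_boundary rl rh sl sh =
     map (\<lambda>s. (rl, s)) (rev [sl..<Suc sh]) @ map (\<lambda>r. (r, sl)) [Suc rl..<Suc rh]"

definition out_boundary :: "nat \<Rightarrow> nat \<Rightarrow> nat \<Rightarrow> nat \<Rightarrow> (nat \<times> nat) list" where
  "out_boundary rl rh sl sh =
     map (\<lambda>r. (r, sh)) [rl..<Suc rh] @ map (\<lambda>s. (rh, s)) (rev [sl..<sh])"

definition sigmaA :: "nat \<Rightarrow> nat \<Rightarrow> (nat \<Rightarrow> nat \<Rightarrow> nat) \<Rightarrow> nat \<Rightarrow> nat \<Rightarrow> nat \<Rightarrow> nat \<Rightarrow> nat \<times> nat \<Rightarrow> nat" where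
  "sigmaA m n M rl rh sl sh e =
     (LEAST q. q < length (out_boundary rl rh sl sh) \<and> reachable m n M e (out_boundary rl rh sl sh ! q))"

definition sigmaZ :: "nat \<Rightarrow> nat \<Rightarrow> (nat \<Rightarrow> nat \<Rightarrow> nat) \<Rightarrow> nat \<Rightarrow> nat \<Rightarrow> nat \<Rightarrow> nat \<Rightarrow> nat \<times> nat \<Rightarrow> nat" where
  "sigmaZ m n M rl rh sl sh e =
     (GREATEST q. q < length (out_boundary rl rh sl sh) \<and> reachable m n M e (out_boundary rl rh sl sh ! q))"

end

theory Submission
  imports Defs "HOL-Library.Product_Order"
begin

text \<open>Paths only move up and to the right. Both boundaries are listed from south-east to
  north-west, so if \<open>i\<close> precedes \<open>j\<close> on the input boundary and \<open>a\<close> precedes \<open>b\<close> on the output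
  boundary, a path from \<open>j\<close> to \<open>a\<close> starts north-west and ends south-east of a path from \<open>i\<close>
  to \<open>b\<close>. Such monotone king-move paths must share an entry, and exchanging their tails there
  shows that \<open>i\<close> also reaches \<open>a\<close> and \<open>j\<close> also reaches \<open>b\<close>. Hence the first (last) output
  entry reachable from \<open>j\<close> cannot precede the first (last) one reachable from \<open>i\<close>.\<close>

lemma successively_le_hd_last:
  fixes xs :: "'a::preorder list"
  assumes "successively (\<le>) xs" "x \<in> set xs"
  shows "hd xs \<le> x \<and> x \<le> last xs"
proof -
  have sorted: "sorted_wrt (\<le>) xs"
    using assms(1) by (simp add: successively_conv_sorted_wrt)
  obtain y ys where "xs = y # ys" using assms(2) by (cases xs) auto
  then have "hd xs \<le> x" using sorted assms(2) by auto
  moreover obtain zs z where "xs = zs @ [z]" using assms(2) by (cases xs rule: rev_cases) auto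
  then have "x \<le> last xs" using sorted assms(2) by (auto simp: sorted_wrt_append)
  ultimately show ?thesis ..
qed

lemma path_step_iff:
  "path_step a b \<longleftrightarrow> a \<noteq> b \<and> a \<le> b \<and> fst b \<le> Suc (fst a) \<and> snd b \<le> Suc (snd a)"
  by (cases a; cases b) (auto simp: path_step_def)

lemma successively_path_step_bounds:
  assumes "successively path_step p" "q \<in> set p"
  shows "hd p \<le> q \<and> q \<le> last p"
  using assms by (intro successively_le_hd_last) (auto elim: successively_mono simp: path_step_iff)

text \<open>Rows grow upwards: \<open>weakly_nw v q\<close> says that \<open>v\<close> lies weakly north-west of \<open>q\<close>.\<close>
definition weakly_nw :: "nat \<times> nat \<Rightarrow> nat \<times> nat \<Rightarrow> bool" where
  "weakly_nw v q \<longleftrightarrow> fst q \<le> fst v \<and> snd v \<le> snd q"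

definition nw_of_path :: "(nat \<times> nat) list \<Rightarrow> nat \<times> nat \<Rightarrow> bool" where
  "nw_of_path Q v \<longleftrightarrow> (\<exists>q\<in>set Q. weakly_nw v q)"

definition se_of_path :: "(nat \<times> nat) list \<Rightarrow> nat \<times> nat \<Rightarrow> bool" where
  "se_of_path Q w \<longleftrightarrow> (\<exists>q\<in>set Q. weakly_nw q w)"

lemma nw_of_path_step_cases:
  assumes "successively path_step Q" "nw_of_path Q v" "path_step v w" "fst w \<le> fst (last Q)"
  shows "nw_of_path Q w \<or> se_of_path Q w"
  using assms
proof (induction Q rule: induct_list012)
  case (2 x)
  then have "weakly_nw v x" by (simp add: nw_of_path_def)
  then have "weakly_nw w x \<or> weakly_nw x w"
    using "2.prems"(3,4) by (cases v; cases w; cases x) (auto simp: weakly_nw_def path_step_def)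
  then show ?case by (auto simp: nw_of_path_def se_of_path_def)
next
  case (3 x y Q)
  show ?case
  proof (cases "nw_of_path (y # Q) v")
    case True
    then show ?thesis using 3 by (auto simp: nw_of_path_def se_of_path_def)
  next
    case False
    then have "weakly_nw v x" "\<not> weakly_nw v y" using "3.prems"(2) by (auto simp: nw_of_path_def)
    then have "weakly_nw w x \<or> weakly_nw x w \<or> weakly_nw w y \<or> weakly_nw y w"
      using "3.prems"(1,3) by (cases v; cases w; cases x; cases y) (auto simp: weakly_nw_def path_step_def)
    then show ?thesis by (auto simp: nw_of_path_def se_of_path_def)
  qed
qed (simp add: nw_of_path_def)

lemma nw_se_of_path_meet:
  assumes "successively path_step Q" "nw_of_path Q v" "se_of_path Q w" "w = v \<or> path_step v w"
  shows "v \<in> set Q \<or> w \<in> set Q"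
  using assms
proof (induction Q rule: induct_list012)
  case (2 x)
  then show ?case
    by (cases v; cases w; cases x) (auto simp: nw_of_path_def se_of_path_def weakly_nw_def path_step_def)
next
  case (3 x y Q)
  have xy: "path_step x y" and vw: "w = v \<or> path_step v w" using "3.prems"(1,4) by simp_all
  have tail: "y \<le> q" if "q \<in> set (y # Q)" for q
    using successively_path_step_bounds[of "y # Q" q] "3.prems"(1) that by auto
  obtain q2 q1 where q2: "q2 = x \<or> y \<le> q2" "weakly_nw v q2"
    and q1: "q1 = x \<or> y \<le> q1" "weakly_nw q1 w"
    using "3.prems"(2,3) tail unfolding nw_of_path_def se_of_path_def list.set(2) insert_iff by blast
  txt \<open>Unless both witnesses can be taken from the tail, one of them is \<open>x\<close> alone, which
    pins the step from \<open>v\<close> to \<open>w\<close> against the first step from \<open>x\<close> to \<open>y\<close>.\<close>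
  consider "nw_of_path (y # Q) v" "se_of_path (y # Q) w"
    | "\<not> nw_of_path (y # Q) v" | "\<not> se_of_path (y # Q) w"
    by blast
  then show ?case
  proof cases
    case 1
    then show ?thesis using "3.IH"(2) "3.prems"(1) vw by auto
  next
    case 2
    then have "weakly_nw v x" "\<not> weakly_nw v y" using "3.prems"(2) by (auto simp: nw_of_path_def)
    then have "fst v = fst x" "fst y = Suc (fst x)" "snd v \<le> snd x"
      using xy by (auto simp: weakly_nw_def path_step_iff less_eq_prod_def)
    moreover have "fst w \<le> fst x \<or> snd y \<le> snd w" "snd x \<le> snd w"
      using q1 xy by (auto simp: weakly_nw_def less_eq_prod_def path_step_iff)
    ultimately have "v = x \<or> w = x \<or> w = y"
      using xy vw by (cases v; cases w; cases x; cases y) (auto simp: path_step_def)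
    then show ?thesis by auto
  next
    case 3
    then have "weakly_nw x w" "\<not> weakly_nw y w" using "3.prems"(3) by (auto simp: se_of_path_def)
    then have "snd w = snd x" "fst w \<le> fst x"
      using xy by (auto simp: weakly_nw_def path_step_iff less_eq_prod_def)
    moreover have "fst x \<le> fst v" "snd v \<le> snd x \<or> fst y \<le> fst v"
      using q2 xy by (auto simp: weakly_nw_def less_eq_prod_def path_step_iff)
    ultimately have "w = x"
      using xy vw by (cases v; cases w; cases x; cases y) (auto simp: path_step_def)
    then show ?thesis by auto
  qed
qed (simp add: nw_of_path_def)

lemma monotone_paths_cross:
  assumes "successively path_step P" "successively path_step Q" "P \<noteq> []"
    and "nw_of_path Q (hd P)" "se_of_path Q (last P)"
  shows "\<exists>v\<in>set P. v \<in> set Q"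
  using assms
proof (induction P rule: induct_list012)
  case (2 v)
  then show ?case using nw_se_of_path_meet[of Q v v] by auto
next
  case (3 v w P)
  obtain q where q: "q \<in> set Q" "weakly_nw q (last (w # P))"
    using "3.prems"(5) by (auto simp: se_of_path_def)
  have "fst w \<le> fst (last (w # P))"
    using successively_path_step_bounds[of "w # P" w] "3.prems"(1) by (simp add: less_eq_prod_def)
  also have "\<dots> \<le> fst q" using q(2) by (simp add: weakly_nw_def)
  also have "\<dots> \<le> fst (last Q)"
    using successively_path_step_bounds[OF "3.prems"(2) q(1)] by (simp add: less_eq_prod_def)
  finally have "nw_of_path Q w \<or> se_of_path Q w"
    using nw_of_path_step_cases "3.prems"(1,2,4) by simp
  then show ?case
  proof
    assume "nw_of_path Q w"
    then show ?thesis using "3.IH"(2) "3.prems" by auto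
  next
    assume "se_of_path Q w"
    then show ?thesis using nw_se_of_path_meet[of Q v w] "3.prems" by auto
  qed
qed simp

lemma is_path_iff:
  "is_path m n M p \<longleftrightarrow> p \<noteq> [] \<and> (\<forall>e\<in>set p. one_entry m n M e) \<and> successively path_step p"
  by (auto simp: is_path_def successively_conv_nth)

lemma reachable_through_common_entry:
  assumes "is_path m n M P" "is_path m n M Q" "v \<in> set P" "v \<in> set Q"
  shows "reachable m n M (hd P) (last Q)"
proof -
  obtain P1 P2 where P: "P = P1 @ v # P2" using split_list[OF assms(3)] by blast
  obtain Q1 Q2 where Q: "Q = Q1 @ v # Q2" using split_list[OF assms(4)] by blast
  have "is_path m n M (P1 @ v # Q2)"
    using assms(1,2) unfolding P Q is_path_iff by (auto simp: successively_append_iff)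
  moreover have "hd (P1 @ v # Q2) = hd P" "last (P1 @ v # Q2) = last Q"
    unfolding P Q by (cases P1; simp)+
  ultimately show ?thesis unfolding reachable_def by metis
qed

lemma reachable_exchange:
  assumes "weakly_nw a' a" "weakly_nw b' b"
    and "reachable m n M a' b" "reachable m n M a b'"
  shows "reachable m n M a b \<and> reachable m n M a' b'"
proof -
  obtain P where P: "is_path m n M P" "hd P = a'" "last P = b" using assms(3) reachable_def by blast
  obtain Q where Q: "is_path m n M Q" "hd Q = a" "last Q = b'" using assms(4) reachable_def by blast
  have "nw_of_path Q (hd P)" "se_of_path Q (last P)"
    using P Q assms(1,2) unfolding nw_of_path_def se_of_path_def is_path_iff by auto
  then obtain v where "v \<in> set P" "v \<in> set Q"
    using monotone_paths_cross P(1) Q(1) unfolding is_path_iff by blast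
  then show ?thesis
    using reachable_through_common_entry P Q by metis
qed

lemma in_boundary_nth_nw:
  assumes "i < j" "j < length (in_boundary rl rh sl sh)"
  shows "weakly_nw (in_boundary rl rh sl sh ! j) (in_boundary rl rh sl sh ! i)"
proof -
  have "sorted_wrt (\<lambda>a b. weakly_nw b a) (in_boundary rl rh sl sh)"
    by (auto simp: in_boundary_def sorted_wrt_append sorted_wrt_map sorted_wrt_rev weakly_nw_def
        simp del: upt_Suc)
  then show ?thesis using assms sorted_wrt_nth_less by fast
qed

lemma out_boundary_nth_nw:
  assumes "i < j" "j < length (out_boundary rl rh sl sh)"
  shows "weakly_nw (out_boundary rl rh sl sh ! j) (out_boundary rl rh sl sh ! i)"
proof -
  have "sorted_wrt (\<lambda>a b. weakly_nw b a) (out_boundary rl rh sl sh)"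
    by (auto simp: out_boundary_def sorted_wrt_append sorted_wrt_map sorted_wrt_rev weakly_nw_def
        simp del: upt_Suc)
  then show ?thesis using assms sorted_wrt_nth_less by fast
qed

lemma Least_le_Least_exchange:
  fixes P Q :: "nat \<Rightarrow> bool"
  assumes "P k" "Q l" and exchange: "\<And>a b. a < b \<Longrightarrow> Q a \<Longrightarrow> P b \<Longrightarrow> P a"
  shows "Least P \<le> Least Q"
proof (rule ccontr)
  assume less: "\<not> Least P \<le> Least Q"
  then have "P (Least Q)"
    using exchange LeastI[of P k] LeastI[of Q l] assms(1,2) by (simp add: not_le)
  then have "Least P \<le> Least Q" by (rule Least_le)
  with less show False ..
qed

lemma Greatest_le_Greatest_exchange:
  fixes P Q :: "nat \<Rightarrow> bool"
  assumes "P k" "Q l" "\<And>a. P a \<Longrightarrow> a \<le> N" "\<And>a. Q a \<Longrightarrow> a \<le> N"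
    and exchange: "\<And>a b. a < b \<Longrightarrow> Q a \<Longrightarrow> P b \<Longrightarrow> Q b"
  shows "Greatest P \<le> Greatest Q"
proof (rule ccontr)
  assume less: "\<not> Greatest P \<le> Greatest Q"
  then have "Q (Greatest P)"
    using exchange GreatestI_nat[of P k N] GreatestI_nat[of Q l N] assms by (simp add: not_le)
  then have "Greatest P \<le> Greatest Q" using Greatest_le_nat assms(4) by blast
  with less show False ..
qed

theorem corollary2:
  fixes m n :: nat and M :: "nat \<Rightarrow> nat \<Rightarrow> nat"
    and rl rh sl sh :: nat and pi pj :: nat
  assumes "zero_one_matrix m n M"
    and "rl \<le> rh" and "rh < m" and "sl \<le> sh" and "sh < n"
    and "pi < pj" and "pj < length (in_boundary rl rh sl sh)"
    and "\<exists>q < length (out_boundary rl rh sl sh).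
           reachable m n M (in_boundary rl rh sl sh ! pi) (out_boundary rl rh sl sh ! q)"
    and "\<exists>q < length (out_boundary rl rh sl sh).
           reachable m n M (in_boundary rl rh sl sh ! pj) (out_boundary rl rh sl sh ! q)"
  shows "sigmaA m n M rl rh sl sh (in_boundary rl rh sl sh ! pj)
           \<ge> sigmaA m n M rl rh sl sh (in_boundary rl rh sl sh ! pi)
         \<and> sigmaZ m n M rl rh sl sh (in_boundary rl rh sl sh ! pj)
           \<ge> sigmaZ m n M rl rh sl sh (in_boundary rl rh sl sh ! pi)"
proof -
  let ?I = "in_boundary rl rh sl sh" and ?O = "out_boundary rl rh sl sh"
  define S where "S e q \<longleftrightarrow> q < length ?O \<and> reachable m n M e (?O ! q)" for e q
  have exchange: "S (?I ! pi) a \<and> S (?I ! pj) b" if "a < b" "S (?I ! pj) a" "S (?I ! pi) b" for a b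
    using that reachable_exchange[OF in_boundary_nth_nw[OF assms(6,7)] out_boundary_nth_nw[of a b]]
    unfolding S_def by auto
  obtain k l where "S (?I ! pi) k" "S (?I ! pj) l" using assms(8,9) unfolding S_def by blast
  moreover have "\<And>e a. S e a \<Longrightarrow> a \<le> length ?O" unfolding S_def by simp
  ultimately show ?thesis
    unfolding sigmaA_def sigmaZ_def S_def[symmetric]
    using Least_le_Least_exchange[of "S (?I ! pi)" k "S (?I ! pj)" l]
      Greatest_le_Greatest_exchange[of "S (?I ! pi)" k "S (?I ! pj)" l "length ?O"] exchange
    by blast
qed

end
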